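(* Let $g\in L^2(I;L^2(\Omega))$ and let $z_{kh}\in X^0_{kh}$ satisfy $B(\varphi_{kh},z_{kh})=(g,\varphi_{kh})_I$ for all $\varphi_{kh}\in X^0_{kh}$. For $w\in X_{kh}(\Gamma)$ the following are equivalent: (A) $\int_{\Sigma_T}w\,\phi_{kh}\,ds\,dt=-\int_{\Omega_T}g\,p_{kh}(\phi_{kh})\,dx\,dt$ for all $\phi_{kh}\in X_{kh}(\Gamma)$, where $p_{kh}(\phi_{kh})\in X_{kh}$ solves $B(p_{kh}(\phi_{kh}),\varphi_{kh})=0$ for all $\varphi_{kh}\in X^0_{kh}$ and $p_{kh}(\phi_{kh})|_{\Sigma_T}=\phi_{kh}$; (B) $\int_{\Sigma_T}w\,\Phi_{kh}\,ds\,dt=B(\Phi_{kh},z_{kh})-\int_{\Omega_T}g\,\Phi_{kh}\,dx\,dt$ for all $\Phi_{kh}\in X_{kh}$.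
   Context: $\Omega\subset\mathbb{R}^N$ ($N=2,3$) is a bounded convex polytope, $\Gamma=\partial\Omega$, $T>0$, $I=(0,T)$, $\Omega_T=I\times\Omega$, $\Sigma_T=I\times\Gamma$; $(\cdot,\cdot)_I$ is the $L^2(I;L^2(\Omega))$ inner product. Time mesh $0=t_0<\dots<t_M=T$, $I_m=(t_{m-1},t_m]$, $k_m=t_m-t_{m-1}$. Space: a shape-regular simplicial triangulation of $\Omega$, $V_h$ continuous piecewise linear functions, $V_h^0=V_h\cap H^1_0(\Omega)$, $V_h(\Gamma)=\{v|_\Gamma:v\in V_h\}$. $X_{kh}$, $X^0_{kh}$, $X_{kh}(\Gamma)$: functions on $I$ constant on each $I_m$ with values in $V_h$, $V^0_h$, $V_h(\Gamma)$; $v_m=v|_{I_m}$. $B(v,w)=\sum_{m=1}^Mk_m(\nabla v_m,\nabla w_m)_{L^2(\Omega)}+\sum_{m=2}^M(v_m-v_{m-1},w_m)_{L^2(\Omega)}+(v_1,w_1)_{L^2(\Omega)}$. *)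

theory Defs
  imports "HOL-Analysis.Analysis"
begin

definition triangulation :: "'a::euclidean_space set set \<Rightarrow> 'a set \<Rightarrow> bool" where
  "triangulation Tr \<Omega> \<longleftrightarrow> finite Tr \<and> Tr \<noteq> {}
     \<and> (\<forall>K\<in>Tr. (int DIM('a)) simplex K)
     \<and> \<Union>Tr = closure \<Omega>
     \<and> (\<forall>K\<in>Tr. \<forall>L\<in>Tr. (K \<inter> L) face_of K \<and> (K \<inter> L) face_of L)"

definition Vh :: "'a::euclidean_space set set \<Rightarrow> ('a \<Rightarrow> real) set" where
  "Vh Tr = {v. continuous_on (\<Union>Tr) v
              \<and> (\<forall>K\<in>Tr. \<exists>a b. \<forall>x\<in>K. v x = a \<bullet> x + b)
              \<and> (\<forall>x. x \<notin> \<Union>Tr \<longrightarrow> v x = 0)}"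

text \<open>V_h^0 = V_h intersected with H^1_0: functions of V_h vanishing on the boundary.\<close>
definition Vh0 :: "'a::euclidean_space set set \<Rightarrow> 'a set \<Rightarrow> ('a \<Rightarrow> real) set" where
  "Vh0 Tr \<Omega> = {v \<in> Vh Tr. \<forall>x\<in>frontier \<Omega>. v x = 0}"

definition bdry_restr :: "'a::euclidean_space set \<Rightarrow> ('a \<Rightarrow> real) \<Rightarrow> ('a \<Rightarrow> real)" where
  "bdry_restr \<Omega> v = (\<lambda>x. if x \<in> frontier \<Omega> then v x else 0)"

definition VhG :: "'a::euclidean_space set set \<Rightarrow> 'a set \<Rightarrow> ('a \<Rightarrow> real) set" where
  "VhG Tr \<Omega> = bdry_restr \<Omega> ` Vh Tr"

definition time_mesh :: "(nat \<Rightarrow> real) \<Rightarrow> nat \<Rightarrow> real \<Rightarrow> bool" where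
  "time_mesh tm M T \<longleftrightarrow> M \<ge> 1 \<and> tm 0 = 0 \<and> tm M = T
     \<and> (\<forall>m<M. tm m < tm (Suc m))"

definition pwc :: "(nat \<Rightarrow> real) \<Rightarrow> nat \<Rightarrow> ('a \<Rightarrow> real) set \<Rightarrow> (real \<Rightarrow> 'a \<Rightarrow> real) set" where
  "pwc tm M V = {u. (\<forall>m\<in>{1..M}. u (tm m) \<in> V \<and> (\<forall>t\<in>{tm (m-1)<..tm m}. u t = u (tm m)))
                  \<and> (\<forall>t. t \<notin> {0<..tm M} \<longrightarrow> u t = (\<lambda>x. 0))}"

text \<open>Gradient (defined a.e., namely wherever the function is differentiable).\<close>
definition grad :: "('a::euclidean_space \<Rightarrow> real) \<Rightarrow> 'a \<Rightarrow> 'a" where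
  "grad f x = (SOME D. GDERIV f x :> D)"

definition L2ip :: "'a::euclidean_space set \<Rightarrow> ('a \<Rightarrow> real) \<Rightarrow> ('a \<Rightarrow> real) \<Rightarrow> real" where
  "L2ip \<Omega> u v = (LINT x:\<Omega>|lebesgue. u x * v x)"

definition Bform :: "(nat \<Rightarrow> real) \<Rightarrow> nat \<Rightarrow> 'a::euclidean_space set
                     \<Rightarrow> (real \<Rightarrow> 'a \<Rightarrow> real) \<Rightarrow> (real \<Rightarrow> 'a \<Rightarrow> real) \<Rightarrow> real" where
  "Bform tm M \<Omega> v w =
     (\<Sum>m=1..M. (tm m - tm (m-1)) * (LINT x:\<Omega>|lebesgue. grad (v (tm m)) x \<bullet> grad (w (tm m)) x))
   + (\<Sum>m=2..M. L2ip \<Omega> (\<lambda>x. v (tm m) x - v (tm (m-1)) x) (w (tm m)))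
   + L2ip \<Omega> (v (tm 1)) (w (tm 1))"

definition L2ipT :: "real \<Rightarrow> 'a::euclidean_space set \<Rightarrow> (real \<Rightarrow> 'a \<Rightarrow> real) \<Rightarrow> (real \<Rightarrow> 'a \<Rightarrow> real) \<Rightarrow> real" where
  "L2ipT T \<Omega> u v = (LINT p:({0<..<T} \<times> \<Omega>)|lebesgue. u (fst p) (snd p) * v (fst p) (snd p))"

text \<open>Surface integral over a flat facet F lying in the hyperplane a.x = b, |a| = 1:
  integrate f composed with the orthogonal projection onto the hyperplane over the prism
  F + [-1/2,1/2] a of unit height; by Fubini this equals the (N-1)-dimensional surface
  integral of f over F.\<close>
definition facet_integral :: "'a::euclidean_space set \<Rightarrow> ('a \<Rightarrow> real) \<Rightarrow> real" where
  "facet_integral F f =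
     (let (a, b) = (SOME (a, b). norm a = 1 \<and> F \<subseteq> {x. a \<bullet> x = b})
      in LINT x:{y + s *\<^sub>R a | y s. y \<in> F \<and> s \<in> {-1/2..1/2}}|lebesgue.
            f (x - (a \<bullet> x - b) *\<^sub>R a))"

text \<open>Surface integral over Gamma = boundary of Omega: sum over the facets of the polytope
  (pairwise overlaps are (N-2)-dimensional, hence negligible).\<close>
definition bdry_integral :: "'a::euclidean_space set \<Rightarrow> ('a \<Rightarrow> real) \<Rightarrow> real" where
  "bdry_integral \<Omega> f = (\<Sum>F\<in>{F. F facet_of closure \<Omega>}. facet_integral F f)"

definition bdry_ipT :: "real \<Rightarrow> 'a::euclidean_space set \<Rightarrow> (real \<Rightarrow> 'a \<Rightarrow> real) \<Rightarrow> (real \<Rightarrow> 'a \<Rightarrow> real) \<Rightarrow> real" where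
  "bdry_ipT T \<Omega> u v = (LINT t:{0<..<T}|lborel. bdry_integral \<Omega> (\<lambda>x. u t x * v t x))"

definition pkh :: "'a::euclidean_space set set \<Rightarrow> (nat \<Rightarrow> real) \<Rightarrow> nat \<Rightarrow> 'a set
                   \<Rightarrow> (real \<Rightarrow> 'a \<Rightarrow> real) \<Rightarrow> (real \<Rightarrow> 'a \<Rightarrow> real)" where
  "pkh Tr tm M \<Omega> \<phi> = (THE p. p \<in> pwc tm M (Vh Tr)
       \<and> (\<forall>\<psi>\<in>pwc tm M (Vh0 Tr \<Omega>). Bform tm M \<Omega> p \<psi> = 0)
       \<and> (\<forall>t. bdry_restr \<Omega> (p t) = \<phi> t))"

end

theory Submission
  imports Defs "HOL-Library.Function_Algebras"
begin

(* Everything hinges on the discrete harmonic extension p_kh being well defined. Existence and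
   uniqueness follow from one finite-dimensional fact: B is bilinear on X_kh and definite there, by
   the energy identity
     2 B(v,v) = sum_m (2 k_m |grad v_m|^2 + |v_m - v_(m-1)|^2) + |v_M|^2,
   so a Lax-Milgram argument without coercivity applies on X^0_kh. Given this, for Phi in X_kh with
   trace phi the difference Phi - p_kh(phi) lies in X^0_kh, hence the equation for z together with
   B(p_kh(phi), z) = 0 gives B(Phi, z) - (g, Phi) = -(g, p_kh(phi)). As w lives on the boundary,
   the boundary integrals of w Phi and w phi agree, and (A) and (B) become the same condition. *)

section \<open>Bilinear forms on subspaces of function spaces\<close>

instantiation "fun" :: (type, real_vector) real_vector
begin

definition scaleR_fun :: "real \<Rightarrow> ('a \<Rightarrow> 'b) \<Rightarrow> 'a \<Rightarrow> 'b" where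
  "scaleR_fun c f = (\<lambda>x. c *\<^sub>R f x)"

instance
  by standard (simp_all add: scaleR_fun_def fun_eq_iff scaleR_add_right scaleR_add_left)

end

lemma scaleR_fun_apply [simp]: "(c *\<^sub>R f) x = c *\<^sub>R f x"
  by (simp add: scaleR_fun_def)

text \<open>Linearity is only required on \<open>V\<close>: the integral forms below are linear only where their
  integrands are integrable.\<close>

definition linear_on :: "'v::real_vector set \<Rightarrow> ('v \<Rightarrow> real) \<Rightarrow> bool" where
  "linear_on V l \<longleftrightarrow> (\<forall>u\<in>V. \<forall>v\<in>V. \<forall>c. l (u + c *\<^sub>R v) = l u + c * l v)"

definition bilinear_on :: "'v::real_vector set \<Rightarrow> ('v \<Rightarrow> 'v \<Rightarrow> real) \<Rightarrow> bool" where
  "bilinear_on V a \<longleftrightarrow> (\<forall>w\<in>V. linear_on V (\<lambda>u. a u w) \<and> linear_on V (a w))"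

lemma linear_onD: "linear_on V l \<Longrightarrow> u \<in> V \<Longrightarrow> v \<in> V \<Longrightarrow> l (u + c *\<^sub>R v) = l u + c * l v"
  by (simp add: linear_on_def)

lemma linear_on_subset: "linear_on V l \<Longrightarrow> W \<subseteq> V \<Longrightarrow> linear_on W l"
  by (auto simp: linear_on_def)

lemma bilinear_on_subset: "bilinear_on V a \<Longrightarrow> W \<subseteq> V \<Longrightarrow> bilinear_on W a"
  unfolding bilinear_on_def linear_on_def by blast

lemma bilinear_on_left: "bilinear_on V a \<Longrightarrow> w \<in> V \<Longrightarrow> linear_on V (\<lambda>u. a u w)"
  by (simp add: bilinear_on_def)

lemma bilinear_on_right: "bilinear_on V a \<Longrightarrow> w \<in> V \<Longrightarrow> linear_on V (a w)"
  by (simp add: bilinear_on_def)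

lemma linear_on_0:
  assumes "linear_on V l" "subspace V"
  shows "l 0 = 0"
  using linear_onD[OF assms(1), of 0 0 1] subspace_0[OF assms(2)] by simp

lemma linear_on_diff:
  assumes "linear_on V l" "subspace V" "u \<in> V" "v \<in> V"
  shows "l (u - v) = l u - l v"
  using linear_onD[OF assms(1,3,4), of "-1"] by simp

lemma linear_imp_linear_on: "linear f \<Longrightarrow> linear_on V f"
  by (simp add: linear_on_def linear_add linear_scale)

lemma linear_on_add: "linear_on V f \<Longrightarrow> linear_on V g \<Longrightarrow> linear_on V (\<lambda>v. f v + g v)"
  by (simp add: linear_on_def algebra_simps)

lemma linear_on_cmult: "linear_on V f \<Longrightarrow> linear_on V (\<lambda>v. c * f v)"
  by (simp add: linear_on_def algebra_simps)

lemma linear_on_sum: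
  "finite I \<Longrightarrow> (\<And>i. i \<in> I \<Longrightarrow> linear_on V (f i)) \<Longrightarrow> linear_on V (\<lambda>v. \<Sum>i\<in>I. f i v)"
  by (induction I rule: finite_induct) (auto simp: linear_on_def algebra_simps)

lemma linear_on_compose:
  assumes "linear_on W f" "linear \<phi>" "\<phi> ` V \<subseteq> W"
  shows "linear_on V (\<lambda>v. f (\<phi> v))"
  using assms by (auto simp: linear_on_def linear_add linear_scale)

lemma linear_on_cong:
  assumes "subspace V" "\<And>v. v \<in> V \<Longrightarrow> f v = g v" "linear_on V g"
  shows "linear_on V f"
  using assms by (auto simp: linear_on_def subspace_add subspace_scale)

lemma linear_fun_apply: "linear (\<lambda>f. f x)"
  by (rule linearI) simp_all

lemma bilinear_on_diff_self:
  assumes "bilinear_on V a" "subspace V" "\<And>u v. u \<in> V \<Longrightarrow> v \<in> V \<Longrightarrow> a u v = a v u"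
    and "u \<in> V" "v \<in> V"
  shows "2 * a (u - v) u = a (u - v) (u - v) + a u u - a v v"
proof -
  have "u - v \<in> V" using assms(2,4,5) by (rule subspace_diff)
  then have "a (u - v) (u - v) = a (u - v) u - a (u - v) v"
    using linear_on_diff[OF bilinear_on_right[OF assms(1)] assms(2,4,5)] by simp
  moreover have "a (u - v) u = a u u - a v u" "a (u - v) v = a u v - a v v"
    using linear_on_diff[OF bilinear_on_left[OF assms(1)] assms(2,4,5)] assms(4,5) by auto
  ultimately show ?thesis using assms(3)[OF assms(4,5)] by simp
qed

lemma subspace_kernel_linear_on:
  assumes "subspace V" "linear_on V f"
  shows "subspace {v \<in> V. f v = 0}"
  unfolding subspace_def
proof (intro conjI ballI allI)
  show "0 \<in> {v \<in> V. f v = 0}" using subspace_0[OF assms(1)] linear_on_0[OF assms(2,1)] by simp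
  fix x y assume "x \<in> {v \<in> V. f v = 0}" "y \<in> {v \<in> V. f v = 0}"
  then show "x + y \<in> {v \<in> V. f v = 0}"
    using linear_onD[OF assms(2), of x y 1] subspace_add[OF assms(1)] by simp
next
  fix c x assume "x \<in> {v \<in> V. f v = 0}"
  then show "c *\<^sub>R x \<in> {v \<in> V. f v = 0}"
    using linear_onD[OF assms(2) subspace_0[OF assms(1)], of x c] linear_on_0[OF assms(2,1)]
      subspace_scale[OF assms(1)] by simp
qed

lemma bilinear_on_representation_extend:
  fixes V :: "'v::real_vector set"
  assumes V: "subspace V" and f: "linear_on V f" and e: "e \<in> V" "f e \<noteq> 0"
    and a: "bilinear_on V a" and anisotropic: "\<And>u. u \<in> V \<Longrightarrow> a u u = 0 \<Longrightarrow> u = 0"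
    and kernel: "\<And>l'. linear_on {v \<in> V. f v = 0} l' \<Longrightarrow>
                   \<exists>q\<in>{v \<in> V. f v = 0}. \<forall>\<psi>\<in>{v \<in> V. f v = 0}. a q \<psi> = l' \<psi>"
    and l: "linear_on V l"
  shows "\<exists>q\<in>V. \<forall>\<psi>\<in>V. a q \<psi> = l \<psi>"
proof -
  \<comment> \<open>\<open>V = V' + span {d}\<close> with \<open>a d \<psi> = 0\<close> on \<open>V'\<close>, where \<open>d\<close> is \<open>e\<close> minus its
    left \<open>a\<close>-projection onto \<open>V'\<close>\<close>
  define V' where "V' = {v \<in> V. f v = 0}"
  have "V' \<subseteq> V" by (auto simp: V'_def)
  obtain r where r: "r \<in> V'" "\<And>\<psi>. \<psi> \<in> V' \<Longrightarrow> a r \<psi> = a e \<psi>"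
    using kernel[folded V'_def, of "a e"] linear_on_subset[OF bilinear_on_right[OF a e(1)] \<open>V' \<subseteq> V\<close>]
    by blast
  define d where "d = e - r"
  have d: "d \<in> V" "f d = f e"
    using r(1) e(1) linear_on_diff[OF f V e(1)] subspace_diff[OF V] by (auto simp: d_def V'_def)
  have d_orth: "a d \<psi> = 0" if "\<psi> \<in> V'" for \<psi>
  proof -
    have "\<psi> \<in> V" "r \<in> V" using that r(1) \<open>V' \<subseteq> V\<close> by auto
    then show ?thesis
      using r(2)[OF that] e(1) linear_on_diff[OF bilinear_on_left[OF a] V] by (simp add: d_def)
  qed
  have "d \<noteq> 0" using d(2) e(2) linear_on_0[OF f V] by auto
  then have "a d d \<noteq> 0" using anisotropic d(1) by blast
  obtain q' where q': "q' \<in> V'" "\<And>\<psi>. \<psi> \<in> V' \<Longrightarrow> a q' \<psi> = l \<psi>"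
    using kernel[folded V'_def, OF linear_on_subset[OF l \<open>V' \<subseteq> V\<close>]] by blast
  define c where "c = (l d - a q' d) / a d d"
  define q where "q = q' + c *\<^sub>R d"
  have "q \<in> V" using q'(1) d(1) \<open>V' \<subseteq> V\<close> V
    by (auto simp: q_def intro: subspace_add subspace_scale)
  moreover have "a q \<psi> = l \<psi>" if "\<psi> \<in> V" for \<psi>
  proof -
    define s where "s = f \<psi> / f d"
    define \<psi>' where "\<psi>' = \<psi> - s *\<^sub>R d"
    have "\<psi>' \<in> V" using that d(1) V by (simp add: \<psi>'_def subspace_diff subspace_scale)
    moreover have "f \<psi>' = 0"
      using linear_onD[OF f that d(1), of "-s"] d(2) e(2) by (simp add: \<psi>'_def s_def)
    ultimately have \<psi>': "\<psi>' \<in> V'" by (simp add: V'_def)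
    have "\<psi> = \<psi>' + s *\<^sub>R d" by (simp add: \<psi>'_def)
    then have "a q \<psi> = a q \<psi>' + s * a q d"
      using linear_onD[OF bilinear_on_right[OF a \<open>q \<in> V\<close>] \<open>\<psi>' \<in> V\<close> d(1)] by simp
    also have "\<dots> = a q' \<psi>' + c * a d \<psi>' + s * (a q' d + c * a d d)"
      using q'(1) \<open>V' \<subseteq> V\<close> d(1) \<open>\<psi>' \<in> V\<close> linear_onD[OF bilinear_on_left[OF a]]
      by (simp add: q_def subset_iff)
    also have "\<dots> = l \<psi>' + s * l d"
      using q'(2)[OF \<psi>'] d_orth[OF \<psi>'] \<open>a d d \<noteq> 0\<close> by (simp add: c_def)
    also have "\<dots> = l \<psi>"
      using linear_onD[OF l \<open>\<psi>' \<in> V\<close> d(1)] \<open>\<psi> = \<psi>' + s *\<^sub>R d\<close> by simp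
    finally show ?thesis .
  qed
  ultimately show ?thesis by blast
qed

text \<open>A finite-dimensional Lax-Milgram lemma that needs no coercivity, only \<open>a u u \<noteq> 0\<close> for
  \<open>u \<noteq> 0\<close>. Finite dimension is expressed by finitely many linear functionals separating the
  points of \<open>V\<close>.\<close>

lemma bilinear_on_representation:
  fixes V :: "'v::real_vector set"
  assumes "finite F" "subspace V"
    and "\<And>f. f \<in> F \<Longrightarrow> linear_on V f"
    and "\<And>v. v \<in> V \<Longrightarrow> (\<And>f. f \<in> F \<Longrightarrow> f v = 0) \<Longrightarrow> v = 0"
    and "bilinear_on V a" "\<And>u. u \<in> V \<Longrightarrow> a u u = 0 \<Longrightarrow> u = 0"
    and "linear_on V l"
  shows "\<exists>q\<in>V. \<forall>\<psi>\<in>V. a q \<psi> = l \<psi>"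
  using assms
proof (induction F arbitrary: V l rule: finite_induct)
  case empty
  then have "V = {0}" using subspace_0 by blast
  moreover have "a 0 0 = 0"
    using linear_on_0[OF bilinear_on_right[OF empty.prems(4)] empty.prems(1)]
      subspace_0[OF empty.prems(1)]
    by blast
  moreover have "l 0 = 0" using linear_on_0[OF empty.prems(6,1)] .
  ultimately show ?case by simp
next
  case (insert f F)
  have f: "linear_on V f" using insert.prems(2) by blast
  define V' where "V' = {v \<in> V. f v = 0}"
  have "V' \<subseteq> V" by (auto simp: V'_def)
  have "subspace V'" unfolding V'_def using subspace_kernel_linear_on insert.prems(1) f by blast
  have IH: "\<exists>q\<in>V'. \<forall>\<psi>\<in>V'. a q \<psi> = l' \<psi>" if "linear_on V' l'" for l'
  proof (rule insert.IH)
    show "\<And>v. v \<in> V' \<Longrightarrow> (\<And>g. g \<in> F \<Longrightarrow> g v = 0) \<Longrightarrow> v = 0"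
      using insert.prems(3) by (auto simp: V'_def)
  qed (use \<open>subspace V'\<close> \<open>V' \<subseteq> V\<close> that insert.prems in
       \<open>auto intro: linear_on_subset bilinear_on_subset\<close>)
  show ?case
  proof (cases "\<exists>e\<in>V. f e \<noteq> 0")
    case False
    then have "V' = V" by (auto simp: V'_def)
    then show ?thesis using IH insert.prems(6) by simp
  next
    case True
    then obtain e where "e \<in> V" "f e \<noteq> 0" by blast
    then show ?thesis
      using bilinear_on_representation_extend[OF insert.prems(1) f _ _ insert.prems(4,5) _
          insert.prems(6)]
        IH[unfolded V'_def]
      by blast
  qed
qed

section \<open>The finite element space\<close>

lemma VhI:
  assumes "continuous_on (\<Union>Tr) v" "\<And>K. K \<in> Tr \<Longrightarrow> \<exists>a b. \<forall>x\<in>K. v x = a \<bullet> x + b"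
    and "\<And>x. x \<notin> \<Union>Tr \<Longrightarrow> v x = 0"
  shows "v \<in> Vh Tr"
  using assms unfolding Vh_def by blast

lemma
  shows Vh_continuous_on: "v \<in> Vh Tr \<Longrightarrow> continuous_on (\<Union>Tr) v"
    and Vh_affine_on: "v \<in> Vh Tr \<Longrightarrow> K \<in> Tr \<Longrightarrow> \<exists>a b. \<forall>x\<in>K. v x = a \<bullet> x + b"
    and Vh_outside: "v \<in> Vh Tr \<Longrightarrow> x \<notin> \<Union>Tr \<Longrightarrow> v x = 0"
  unfolding Vh_def by blast+

lemma subspace_Vh: "subspace (Vh Tr)"
  unfolding subspace_def
proof (intro conjI ballI allI)
  show "0 \<in> Vh Tr"
    by (rule VhI) (auto intro!: exI[of _ 0])
  fix u v assume u: "u \<in> Vh Tr" and v: "v \<in> Vh Tr"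
  show "u + v \<in> Vh Tr"
  proof (rule VhI)
    fix K assume "K \<in> Tr"
    then obtain a1 b1 a2 b2 where "\<forall>x\<in>K. u x = a1 \<bullet> x + b1" "\<forall>x\<in>K. v x = a2 \<bullet> x + b2"
      using Vh_affine_on u v by metis
    then have "\<forall>x\<in>K. (u + v) x = (a1 + a2) \<bullet> x + (b1 + b2)" by (simp add: inner_add_left)
    then show "\<exists>a b. \<forall>x\<in>K. (u + v) x = a \<bullet> x + b" by blast
  next
    show "continuous_on (\<Union>Tr) (u + v)"
      unfolding plus_fun_def using u v by (intro continuous_on_add Vh_continuous_on)
  next
    fix x assume "x \<notin> \<Union>Tr"
    then show "(u + v) x = 0" using Vh_outside[OF u] Vh_outside[OF v] by simp
  qed
next
  fix c and v assume v: "v \<in> Vh Tr"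
  show "c *\<^sub>R v \<in> Vh Tr"
  proof (rule VhI)
    fix K assume "K \<in> Tr"
    then obtain a b where "\<forall>x\<in>K. v x = a \<bullet> x + b"
      using Vh_affine_on v by metis
    then have "\<forall>x\<in>K. (c *\<^sub>R v) x = (c *\<^sub>R a) \<bullet> x + c * b" by (simp add: distrib_left)
    then show "\<exists>a b. \<forall>x\<in>K. (c *\<^sub>R v) x = a \<bullet> x + b" by blast
  next
    show "continuous_on (\<Union>Tr) (c *\<^sub>R v)"
      unfolding scaleR_fun_def using v
      by (intro continuous_on_scaleR continuous_on_const Vh_continuous_on)
  next
    fix x assume "x \<notin> \<Union>Tr"
    then show "(c *\<^sub>R v) x = 0" using Vh_outside[OF v] by simp
  qed
qed

lemma subspace_Vh0: "subspace (Vh0 Tr \<Omega>)"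
  using subspace_Vh[of Tr] unfolding Vh0_def subspace_def by simp

lemma Vh0_subset_Vh: "Vh0 Tr \<Omega> \<subseteq> Vh Tr"
  by (auto simp: Vh0_def)

lemma Vh_unisolvent:
  assumes "triangulation Tr \<Omega>"
  shows "\<exists>X. finite X \<and> (\<forall>v\<in>Vh Tr. (\<forall>x\<in>X. v x = 0) \<longrightarrow> v = 0)"
proof -
  have "\<forall>K\<in>Tr. \<exists>C. finite C \<and> K = convex hull C"
    using assms unfolding triangulation_def simplex_def by (meson aff_independent_finite)
  then obtain C where C: "\<And>K. K \<in> Tr \<Longrightarrow> finite (C K) \<and> K = convex hull (C K)"
    by metis
  have "finite Tr" using assms by (simp add: triangulation_def)
  have "v = 0" if v: "v \<in> Vh Tr" and vanish: "\<forall>x\<in>\<Union>(C ` Tr). v x = 0" for v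
  proof (rule ext)
    fix x
    show "v x = 0 x"
    proof (cases "x \<in> \<Union>Tr")
      case False
      then show ?thesis using v by (simp add: Vh_outside)
    next
      case True
      then obtain K where K: "K \<in> Tr" "x \<in> K" by blast
      obtain a b where ab: "\<forall>y\<in>K. v y = a \<bullet> y + b" using Vh_affine_on[OF v K(1)] by blast
      have "C K \<subseteq> K" by (metis C[OF K(1)] hull_subset)
      have "C K \<subseteq> {y. a \<bullet> y = - b}"
      proof
        fix y assume y: "y \<in> C K"
        then have "v y = 0" using vanish K(1) by blast
        moreover have "v y = a \<bullet> y + b" using ab \<open>C K \<subseteq> K\<close> y by blast
        ultimately show "y \<in> {y. a \<bullet> y = - b}" by simp
      qed
      then have "convex hull (C K) \<subseteq> {y. a \<bullet> y = - b}"
        by (rule hull_minimal) (rule convex_hyperplane)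
      then show ?thesis using ab K C[OF K(1)] by auto
    qed
  qed
  then show ?thesis
    using C \<open>finite Tr\<close> by (intro exI[of _ "\<Union>(C ` Tr)"]) auto
qed

locale triangulated_domain =
  fixes Tr :: "'a::euclidean_space set set" and \<Omega> :: "'a set"
  assumes triangulation: "triangulation Tr \<Omega>"
    and open_domain: "open \<Omega>" and bounded_domain: "bounded \<Omega>"
begin

lemma finite_Tr: "finite Tr" and Union_Tr: "\<Union>Tr = closure \<Omega>"
  using triangulation by (auto simp: triangulation_def)

lemma compact_Union_Tr: "compact (\<Union>Tr)"
  by (simp add: Union_Tr compact_closure bounded_domain)

lemma domain_lmeasurable: "\<Omega> \<in> lmeasurable"
  by (rule lmeasurable_open[OF bounded_domain open_domain])

lemma Vh_bounded: "v \<in> Vh Tr \<Longrightarrow> \<exists>B. \<forall>x. \<bar>v x\<bar> \<le> B"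
proof -
  assume v: "v \<in> Vh Tr"
  have "compact (v ` \<Union>Tr)"
    using v compact_Union_Tr by (intro compact_continuous_image Vh_continuous_on)
  then obtain B where B: "\<forall>y\<in>v ` \<Union>Tr. norm y \<le> B"
    using compact_imp_bounded bounded_iff by metis
  have "\<bar>v x\<bar> \<le> max B 0" for x
  proof (cases "x \<in> \<Union>Tr")
    case True
    then have "norm (v x) \<le> B" using B by blast
    then show ?thesis by simp
  next
    case False
    then show ?thesis using v by (simp add: Vh_outside)
  qed
  then show ?thesis by blast
qed

lemma Vh_borel_measurable: "v \<in> Vh Tr \<Longrightarrow> v \<in> borel_measurable borel"
proof -
  assume v: "v \<in> Vh Tr"
  have "(\<lambda>x. indicator (\<Union>Tr) x *\<^sub>R v x) \<in> borel_measurable borel"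
    using v compact_Union_Tr
    by (intro borel_measurable_continuous_on_indicator Vh_continuous_on)
       (auto simp: compact_imp_closed)
  moreover have "(\<lambda>x. indicator (\<Union>Tr) x *\<^sub>R v x) = v"
    using v by (auto simp: indicator_def fun_eq_iff Vh_outside)
  ultimately show ?thesis by simp
qed

end

section \<open>The \<open>L\<^sup>2\<close> and Dirichlet forms on \<open>V\<^sub>h\<close>\<close>

lemma absolutely_integrable_bounded_lmeasurable:
  fixes f :: "'a::euclidean_space \<Rightarrow> real"
  assumes "S \<in> lmeasurable" "f \<in> borel_measurable (lebesgue_on S)" "\<And>x. x \<in> S \<Longrightarrow> \<bar>f x\<bar> \<le> B"
  shows "f absolutely_integrable_on S"
proof -
  have "bounded (f ` S)" using assms(3) by (auto simp: bounded_iff)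
  then show ?thesis
    using absolutely_integrable_bounded_measurable_product[OF bilinear_times assms(2) _ _
        absolutely_integrable_on_const[OF assms(1), of 1]] assms(1)
    by (simp add: fmeasurable_def)
qed

text \<open>No measurability hypothesis is needed: Lebesgue measure is complete.\<close>

lemma integral_lebesgue_cong_AE:
  fixes f g :: "'a::euclidean_space \<Rightarrow> real"
  assumes "AE x in lebesgue. f x = g x"
  shows "integral\<^sup>L lebesgue f = integral\<^sup>L lebesgue g"
proof (cases "f \<in> borel_measurable lebesgue")
  case True
  then show ?thesis using borel_measurable_AE[OF True assms] assms by (rule integral_cong_AE)
next
  case False
  have "AE x in lebesgue. g x = f x" using assms by auto
  then have "g \<notin> borel_measurable lebesgue" using False borel_measurable_AE by blast
  then show ?thesis using False by (metis borel_measurable_integrable not_integrable_integral_eq)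
qed

lemma L2ip_commute: "L2ip \<Omega> u v = L2ip \<Omega> v u"
  by (simp add: L2ip_def mult.commute)

lemma L2ip_self_nonneg: "0 \<le> L2ip \<Omega> u u"
  unfolding L2ip_def set_lebesgue_integral_def
  by (rule integral_nonneg_AE) (auto simp: indicator_def)

lemma grad_eqI:
  assumes "GDERIV f x :> D"
  shows "grad f x = D"
  unfolding grad_def
proof (rule some_equality)
  fix D' assume "GDERIV f x :> D'"
  then have "(\<lambda>h. h \<bullet> D') = (\<lambda>h. h \<bullet> D)"
    using assms has_derivative_unique by (auto simp: gderiv_def)
  then have "(D' - D) \<bullet> D' = (D' - D) \<bullet> D" by metis
  then have "(D' - D) \<bullet> (D' - D) = 0" by (simp add: inner_diff_right)
  then show "D' = D" by simp
qed (fact assms)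

lemma gderiv_affine_on_interior:
  assumes "\<And>y. y \<in> K \<Longrightarrow> f y = a \<bullet> y + b" "x \<in> interior K"
  shows "GDERIV f x :> a"
proof -
  have "((\<lambda>y. a \<bullet> y + b) has_derivative (\<lambda>h. h \<bullet> a)) (at x)"
    by (auto intro!: derivative_eq_intros simp: inner_commute)
  then show ?thesis
    unfolding gderiv_def
    by (rule has_derivative_transform_within_open[OF _ open_interior assms(2)])
       (simp add: assms(1) subsetD[OF interior_subset])
qed

lemma Vh_gderiv:
  assumes "v \<in> Vh Tr"
  shows "\<exists>a. \<forall>K\<in>Tr. \<forall>x\<in>interior K. GDERIV v x :> a K"
proof -
  have "\<exists>a. \<forall>x\<in>interior K. GDERIV v x :> a" if K: "K \<in> Tr" for K
  proof -
    obtain a b where "\<forall>y\<in>K. v y = a \<bullet> y + b" using Vh_affine_on[OF assms K] by blast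
    then show ?thesis using gderiv_affine_on_interior by blast
  qed
  then show ?thesis by (rule bchoice[rule_format])
qed

lemma grad_Vh_add:
  assumes "u \<in> Vh Tr" "v \<in> Vh Tr" "x \<in> \<Union>(interior ` Tr)"
  shows "grad (u + c *\<^sub>R v) x = grad u x + c *\<^sub>R grad v x"
proof -
  obtain Du Dv where "GDERIV u x :> Du" "GDERIV v x :> Dv"
    using Vh_gderiv[OF assms(1)] Vh_gderiv[OF assms(2)] assms(3) by blast
  moreover from this have "GDERIV (u + c *\<^sub>R v) x :> Du + c *\<^sub>R Dv"
    unfolding gderiv_def plus_fun_def scaleR_fun_def
    by (auto intro!: derivative_eq_intros simp: inner_add_right)
  ultimately show ?thesis by (simp add: grad_eqI)
qed

lemma continuous_on_grad_Vh: "v \<in> Vh Tr \<Longrightarrow> continuous_on (\<Union>(interior ` Tr)) (grad v)"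
proof (rule continuous_on_open_Union)
  fix S assume v: "v \<in> Vh Tr" and "S \<in> interior ` Tr"
  then obtain K where K: "K \<in> Tr" "S = interior K" by blast
  obtain a where "\<forall>K\<in>Tr. \<forall>x\<in>interior K. GDERIV v x :> a K" using Vh_gderiv[OF v] by blast
  then have "\<And>x. x \<in> S \<Longrightarrow> a K = grad v x" using K by (metis grad_eqI)
  then show "continuous_on S (grad v)" by (rule continuous_on_eq[OF continuous_on_const])
qed auto

definition dirichlet_form :: "'a::euclidean_space set \<Rightarrow> ('a \<Rightarrow> real) \<Rightarrow> ('a \<Rightarrow> real) \<Rightarrow> real" where
  "dirichlet_form \<Omega> u v = (LINT x:\<Omega>|lebesgue. grad u x \<bullet> grad v x)"

lemma dirichlet_form_commute: "dirichlet_form \<Omega> u v = dirichlet_form \<Omega> v u"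
  by (simp add: dirichlet_form_def inner_commute)

lemma dirichlet_form_self_nonneg: "0 \<le> dirichlet_form \<Omega> u u"
  unfolding dirichlet_form_def set_lebesgue_integral_def
  by (rule integral_nonneg_AE) (auto simp: indicator_def)

context triangulated_domain
begin

lemma Vh_lebesgue_measurable: "v \<in> Vh Tr \<Longrightarrow> v \<in> borel_measurable lebesgue"
  by (rule measurable_completion) (simp add: Vh_borel_measurable)

lemma set_integrable_Vh_mult:
  assumes "u \<in> Vh Tr" "v \<in> Vh Tr"
  shows "set_integrable lebesgue \<Omega> (\<lambda>x. u x * v x)"
proof -
  obtain Bu Bv where Bu: "\<And>x. \<bar>u x\<bar> \<le> Bu" and Bv: "\<And>x. \<bar>v x\<bar> \<le> Bv"
    using Vh_bounded assms by metis
  have "\<bar>u x * v x\<bar> \<le> Bu * Bv" for x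
    using mult_mono'[OF Bu Bv] by (simp add: abs_mult)
  moreover have "(\<lambda>x. u x * v x) \<in> borel_measurable (lebesgue_on \<Omega>)"
    using assms by (intro measurable_restrict_space1 borel_measurable_times Vh_lebesgue_measurable)
  ultimately show ?thesis
    using domain_lmeasurable by (intro absolutely_integrable_bounded_lmeasurable)
qed

lemma bilinear_on_L2ip: "bilinear_on (Vh Tr) (L2ip \<Omega>)"
proof -
  have left: "L2ip \<Omega> (u + c *\<^sub>R v) w = L2ip \<Omega> u w + c * L2ip \<Omega> v w"
    if "u \<in> Vh Tr" "v \<in> Vh Tr" "w \<in> Vh Tr" for u v w c
  proof -
    have "L2ip \<Omega> (u + c *\<^sub>R v) w = (LINT x:\<Omega>|lebesgue. u x * w x + c * (v x * w x))"
      by (simp add: L2ip_def algebra_simps)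
    also have "\<dots> = L2ip \<Omega> u w + c * L2ip \<Omega> v w"
      unfolding L2ip_def using that by (simp add: set_integrable_Vh_mult)
    finally show ?thesis .
  qed
  show ?thesis
    unfolding bilinear_on_def linear_on_def
  proof (intro ballI allI conjI)
    fix u v w c assume "w \<in> Vh Tr" "u \<in> Vh Tr" "v \<in> Vh Tr"
    then show "L2ip \<Omega> (u + c *\<^sub>R v) w = L2ip \<Omega> u w + c * L2ip \<Omega> v w"
      and "L2ip \<Omega> w (u + c *\<^sub>R v) = L2ip \<Omega> w u + c * L2ip \<Omega> w v"
      using left by (simp_all only: L2ip_commute[of \<Omega> w])
  qed
qed

lemma L2ip_self_eq_0:
  assumes u: "u \<in> Vh Tr" and "L2ip \<Omega> u u = 0"
  shows "u = 0"
proof -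
  have "AE x in lebesgue. indicator \<Omega> x * (u x * u x) = 0"
    using assms set_integrable_Vh_mult[OF u u]
    unfolding L2ip_def set_lebesgue_integral_def set_integrable_def
    by (subst (asm) integral_nonneg_eq_0_iff_AE) (auto simp: indicator_def)
  then have "AE x in lebesgue. x \<in> \<Omega> \<longrightarrow> u x = 0"
    by (rule eventually_mono) (simp add: indicator_def)
  then obtain N where "N \<in> null_sets lebesgue" "{x \<in> space lebesgue. \<not> (x \<in> \<Omega> \<longrightarrow> u x = 0)} \<subseteq> N"
    unfolding eventually_ae_filter by blast
  then have "{x \<in> \<Omega>. u x \<noteq> 0} \<subseteq> N" by auto
  then have "negligible {x \<in> \<Omega>. u x \<noteq> 0}"
    using \<open>N \<in> null_sets lebesgue\<close> negligible_iff_null_sets negligible_subset by blast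
  moreover have "open {x \<in> \<Omega>. u x \<noteq> 0}"
  proof -
    have "continuous_on \<Omega> u"
      using Vh_continuous_on[OF u] Union_Tr closure_subset continuous_on_subset by metis
    then show ?thesis
      using continuous_open_preimage[OF _ open_domain, of u "-{0}"]
      by (simp add: vimage_def Int_def conj_commute open_Compl)
  qed
  ultimately have "\<forall>x\<in>\<Omega>. u x = 0" using open_not_negligible by blast
  then have "u x = 0" if "x \<in> closure \<Omega>" for x
    using continuous_constant_on_closure Vh_continuous_on[OF u] Union_Tr that by metis
  then show ?thesis using Vh_outside[OF u] Union_Tr by (auto simp: fun_eq_iff)
qed

lemma AE_element_interiors: "AE x in lebesgue. (x \<in> \<Omega> \<inter> \<Union>(interior ` Tr)) = (x \<in> \<Omega>)"
proof -
  have "\<Omega> - \<Union>(interior ` Tr) \<subseteq> \<Union>(frontier ` Tr)"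
  proof
    fix x assume x: "x \<in> \<Omega> - \<Union>(interior ` Tr)"
    then obtain K where K: "K \<in> Tr" "x \<in> K" using Union_Tr closure_subset by blast
    moreover have "closed K"
      using K(1) triangulation closed_simplex by (auto simp: triangulation_def)
    ultimately have "x \<in> frontier K" using x by (auto simp: frontier_def)
    then show "x \<in> \<Union>(frontier ` Tr)" using K(1) by blast
  qed
  moreover have "negligible (\<Union>(frontier ` Tr))"
    using finite_Tr triangulation
    by (intro negligible_Union)
       (auto simp: triangulation_def intro!: negligible_convex_frontier convex_simplex)
  ultimately have "\<Omega> - \<Union>(interior ` Tr) \<in> null_sets lebesgue"
    using negligible_subset negligible_iff_null_sets by blast
  then show ?thesis by (rule AE_I') auto
qed

text \<open>\<open>grad\<close> is an arbitrary choice where a function of \<open>V\<^sub>h\<close> has a kink; only the element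
  interiors, which cover \<open>\<Omega>\<close> up to a null set, carry its true value.\<close>

lemma dirichlet_form_element_interiors:
  "dirichlet_form \<Omega> u v = (LINT x:\<Omega> \<inter> \<Union>(interior ` Tr)|lebesgue. grad u x \<bullet> grad v x)"
  unfolding dirichlet_form_def set_lebesgue_integral_def
  by (rule integral_lebesgue_cong_AE, use AE_element_interiors in \<open>eventually_elim\<close>)
     (auto simp: indicator_def)

lemma lmeasurable_element_interiors: "\<Omega> \<inter> \<Union>(interior ` Tr) \<in> lmeasurable"
  using bounded_domain open_domain by (intro lmeasurable_open) auto

lemma grad_Vh_bounded:
  assumes "v \<in> Vh Tr"
  shows "\<exists>B. \<forall>x\<in>\<Union>(interior ` Tr). norm (grad v x) \<le> B"
proof -
  obtain a where a: "\<forall>K\<in>Tr. \<forall>x\<in>interior K. GDERIV v x :> a K" using Vh_gderiv[OF assms] by blast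
  have "norm (grad v x) \<le> (\<Sum>K\<in>Tr. norm (a K))" if x: "x \<in> \<Union>(interior ` Tr)" for x
  proof -
    obtain K where K: "K \<in> Tr" "x \<in> interior K" using x by blast
    then have "grad v x = a K" using a by (simp add: grad_eqI)
    moreover have "norm (a K) \<le> (\<Sum>K\<in>Tr. norm (a K))"
      using K(1) finite_Tr by (intro member_le_sum) auto
    ultimately show ?thesis by simp
  qed
  then show ?thesis by blast
qed

lemma absolutely_integrable_grad_Vh:
  assumes "u \<in> Vh Tr" "v \<in> Vh Tr"
  shows "(\<lambda>x. grad u x \<bullet> grad v x) absolutely_integrable_on (\<Omega> \<inter> \<Union>(interior ` Tr))"
proof -
  obtain Bu Bv where Bu: "\<forall>x\<in>\<Union>(interior ` Tr). norm (grad u x) \<le> Bu"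
    and Bv: "\<forall>x\<in>\<Union>(interior ` Tr). norm (grad v x) \<le> Bv"
    using grad_Vh_bounded assms by metis
  show ?thesis
  proof (rule absolutely_integrable_bounded_lmeasurable)
    show "\<Omega> \<inter> \<Union>(interior ` Tr) \<in> lmeasurable"
      by (rule lmeasurable_element_interiors)
    then show "(\<lambda>x. grad u x \<bullet> grad v x) \<in> borel_measurable (lebesgue_on (\<Omega> \<inter> \<Union>(interior ` Tr)))"
      using assms by (intro continuous_imp_measurable_on_sets_lebesgue continuous_intros
          continuous_on_subset[OF continuous_on_grad_Vh]) auto
    show "\<bar>grad u x \<bullet> grad v x\<bar> \<le> Bu * Bv" if "x \<in> \<Omega> \<inter> \<Union>(interior ` Tr)" for x
      using Cauchy_Schwarz_ineq2[of "grad u x" "grad v x"]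
        mult_mono'[of "norm (grad u x)" Bu "norm (grad v x)" Bv]
        Bu Bv that by auto
  qed
qed

lemma bilinear_on_dirichlet_form: "bilinear_on (Vh Tr) (dirichlet_form \<Omega>)"
proof -
  have left: "dirichlet_form \<Omega> (u + c *\<^sub>R v) w = dirichlet_form \<Omega> u w + c * dirichlet_form \<Omega> v w"
    if "u \<in> Vh Tr" "v \<in> Vh Tr" "w \<in> Vh Tr" for u v w c
  proof -
    have "dirichlet_form \<Omega> (u + c *\<^sub>R v) w
        = (LINT x:\<Omega> \<inter> \<Union>(interior ` Tr)|lebesgue. grad u x \<bullet> grad w x + c * (grad v x \<bullet> grad w x))"
      unfolding dirichlet_form_element_interiors using that lmeasurable_element_interiors
      by (intro set_lebesgue_integral_cong) (auto simp: grad_Vh_add inner_add_left fmeasurable_def)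
    also have "\<dots> = dirichlet_form \<Omega> u w + c * dirichlet_form \<Omega> v w"
      unfolding dirichlet_form_element_interiors using that
      by (simp add: absolutely_integrable_grad_Vh)
    finally show ?thesis .
  qed
  show ?thesis
    unfolding bilinear_on_def linear_on_def
  proof (intro ballI allI conjI)
    fix u v w c assume "w \<in> Vh Tr" "u \<in> Vh Tr" "v \<in> Vh Tr"
    then show "dirichlet_form \<Omega> (u + c *\<^sub>R v) w = dirichlet_form \<Omega> u w + c * dirichlet_form \<Omega> v w"
      and "dirichlet_form \<Omega> w (u + c *\<^sub>R v) = dirichlet_form \<Omega> w u + c * dirichlet_form \<Omega> w v"
      using left by (simp_all only: dirichlet_form_commute[of \<Omega> w])
  qed
qed

end

section \<open>Piecewise constant functions in time\<close>

lemma pwc_outside: "u \<in> pwc tm M V \<Longrightarrow> t \<notin> {0<..tm M} \<Longrightarrow> u t = 0"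
  unfolding pwc_def zero_fun_def by blast

lemma pwc_step: "u \<in> pwc tm M V \<Longrightarrow> m \<in> {1..M} \<Longrightarrow> t \<in> {tm (m - 1)<..tm m} \<Longrightarrow> u t = u (tm m)"
  unfolding pwc_def by blast

lemma pwc_node: "u \<in> pwc tm M V \<Longrightarrow> m \<in> {1..M} \<Longrightarrow> u (tm m) \<in> V"
  unfolding pwc_def by blast

lemma pwc_mono: "V \<subseteq> W \<Longrightarrow> pwc tm M V \<subseteq> pwc tm M W"
  unfolding pwc_def by blast

lemma pwcI:
  assumes "\<And>m. m \<in> {1..M} \<Longrightarrow> u (tm m) \<in> V"
    and "\<And>m t. m \<in> {1..M} \<Longrightarrow> t \<in> {tm (m - 1)<..tm m} \<Longrightarrow> u t = u (tm m)"
    and "\<And>t. t \<notin> {0<..tm M} \<Longrightarrow> u t = 0"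
  shows "u \<in> pwc tm M V"
  unfolding pwc_def mem_Collect_eq
proof (intro conjI ballI allI impI)
  show "\<And>t. t \<notin> {0<..tm M} \<Longrightarrow> u t = (\<lambda>x. 0)" using assms(3) by (simp only: zero_fun_def)
qed (fact assms(1,2))+

lemma zero_in_pwc: "0 \<in> V \<Longrightarrow> 0 \<in> pwc tm M V"
  by (rule pwcI) simp_all

lemma subspace_pwc:
  assumes V: "subspace V"
  shows "subspace (pwc tm M V)"
proof -
  have "0 \<in> pwc tm M V" by (rule zero_in_pwc[OF subspace_0[OF V]])
  moreover have "u + v \<in> pwc tm M V" if u: "u \<in> pwc tm M V" and v: "v \<in> pwc tm M V" for u v
  proof (rule pwcI)
    fix m t assume mt: "m \<in> {1..M}" "t \<in> {tm (m - 1)<..tm m}"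
    show "(u + v) t = (u + v) (tm m)" using pwc_step[OF u mt] pwc_step[OF v mt] by simp
  qed (simp_all add: pwc_node[OF u] pwc_node[OF v] pwc_outside[OF u] pwc_outside[OF v]
      subspace_add[OF V])
  moreover have "c *\<^sub>R u \<in> pwc tm M V" if u: "u \<in> pwc tm M V" for c u
  proof (rule pwcI)
    fix m t assume mt: "m \<in> {1..M}" "t \<in> {tm (m - 1)<..tm m}"
    show "(c *\<^sub>R u) t = (c *\<^sub>R u) (tm m)" using pwc_step[OF u mt] by simp
  qed (simp_all add: pwc_node[OF u] pwc_outside[OF u] subspace_scale[OF V])
  ultimately show ?thesis by (simp add: subspace_def)
qed

lemma pwc_compose:
  assumes "u \<in> pwc tm M V" "f 0 = 0"
  shows "(\<lambda>t. f (u t)) \<in> pwc tm M (f ` V)"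
proof (rule pwcI)
  fix m t assume mt: "m \<in> {1..M}" "t \<in> {tm (m - 1)<..tm m}"
  show "f (u t) = f (u (tm m))" using pwc_step[OF assms(1) mt] by simp
qed (simp_all add: pwc_node[OF assms(1)] pwc_outside[OF assms(1)] assms(2))

locale fe_discretisation = triangulated_domain Tr \<Omega>
  for Tr :: "'a::euclidean_space set set" and \<Omega> :: "'a set" +
  fixes tm :: "nat \<Rightarrow> real" and M :: nat and T :: real
  assumes time_mesh: "time_mesh tm M T"
begin

lemma M_pos: "1 \<le> M" and tm_0: "tm 0 = 0" and tm_Suc: "\<And>m. m < M \<Longrightarrow> tm m < tm (Suc m)"
  using time_mesh by (auto simp: time_mesh_def)

lemma tm_strict_mono: "i < j \<Longrightarrow> j \<le> M \<Longrightarrow> tm i < tm j"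
proof (induction j)
  case (Suc j)
  then show ?case using tm_Suc[of j] by (cases "i = j") auto
qed simp

lemma tm_mono: "i \<le> j \<Longrightarrow> j \<le> M \<Longrightarrow> tm i \<le> tm j"
  using tm_strict_mono by (cases "i = j") (auto simp: less_le)

lemma step_cover:
  assumes "t \<in> {0<..tm M}"
  shows "\<exists>m\<in>{1..M}. t \<in> {tm (m - 1)<..tm m}"
proof -
  define m where "m = (LEAST m. t \<le> tm m)"
  have "t \<le> tm m" "m \<le> M"
    using assms LeastI[of "\<lambda>m. t \<le> tm m" M] Least_le[of "\<lambda>m. t \<le> tm m" M] by (auto simp: m_def)
  moreover have "m \<noteq> 0"
  proof
    assume "m = 0"
    then show False using \<open>t \<le> tm m\<close> assms tm_0 by simp
  qed
  moreover have "\<not> t \<le> tm (m - 1)"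
    using not_less_Least[of "m - 1" "\<lambda>m. t \<le> tm m"] \<open>m \<noteq> 0\<close> by (auto simp: m_def)
  ultimately show ?thesis by (intro bexI[of _ m]) auto
qed

lemma step_disjoint:
  assumes "m \<in> {1..M}" "m' \<in> {1..M}" "t \<in> {tm (m - 1)<..tm m}" "t \<in> {tm (m' - 1)<..tm m'}"
  shows "m = m'"
proof -
  have False if "i \<in> {1..M}" "j \<in> {1..M}" "t \<in> {tm (i - 1)<..tm i}" "t \<in> {tm (j - 1)<..tm j}" "i < j"
    for i j
  proof -
    have "tm i \<le> tm (j - 1)" using that by (intro tm_mono) auto
    then show False using that by auto
  qed
  then show ?thesis using assms by (metis linorder_neqE_nat)
qed

lemma pwc_mem: "u \<in> pwc tm M V \<Longrightarrow> 0 \<in> V \<Longrightarrow> u t \<in> V"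
  using step_cover pwc_step pwc_node pwc_outside by metis

lemma pwc_eqI:
  assumes "u \<in> pwc tm M V" "v \<in> pwc tm M W" "\<And>m. m \<in> {1..M} \<Longrightarrow> u (tm m) = v (tm m)"
  shows "u = v"
proof
  fix t
  show "u t = v t"
  proof (cases "t \<in> {0<..tm M}")
    case True
    then show ?thesis using step_cover assms pwc_step by metis
  next
    case False
    then show ?thesis using pwc_outside[OF assms(1)] pwc_outside[OF assms(2)] by simp
  qed
qed

lemma pwc_lift:
  assumes "0 \<in> V" "f 0 = 0" "\<phi> \<in> pwc tm M (f ` V)"
  shows "\<exists>u\<in>pwc tm M V. \<forall>t. f (u t) = \<phi> t"
proof
  \<comment> \<open>the preimage depends on the value \<open>\<phi> t\<close> only, so the lift stays constant on each step\<close>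
  define lift where "lift y = (if y = 0 then 0 else (SOME v. v \<in> V \<and> f v = y))" for y
  have lift: "lift y \<in> V \<and> f (lift y) = y" if "y \<in> f ` V" for y
    using that assms(1,2) someI_ex[of "\<lambda>v. v \<in> V \<and> f v = y"] by (auto simp: lift_def)
  have "0 \<in> f ` V" using assms(1,2) by force
  then show "\<forall>t. f (lift (\<phi> t)) = \<phi> t"
    using lift pwc_mem[OF assms(3)] by blast
  show "(\<lambda>t. lift (\<phi> t)) \<in> pwc tm M V"
  proof (rule pwcI)
    fix m t assume mt: "m \<in> {1..M}" "t \<in> {tm (m - 1)<..tm m}"
    show "lift (\<phi> t) = lift (\<phi> (tm m))" using pwc_step[OF assms(3) mt] by simp
  next
    fix m assume "m \<in> {1..M}"
    then show "lift (\<phi> (tm m)) \<in> V" using lift pwc_node[OF assms(3)] by blast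
  next
    fix t assume "t \<notin> {0<..tm M}"
    then show "lift (\<phi> t) = 0" using pwc_outside[OF assms(3)] by (simp add: lift_def)
  qed
qed

lemma pwc_indicator_sum:
  assumes "u \<in> pwc tm M V"
  shows "u t x = (\<Sum>m\<in>{1..M}. indicator {tm (m - 1)<..tm m} t * u (tm m) x)"
proof (cases "t \<in> {0<..tm M}")
  case True
  then obtain m0 where m0: "m0 \<in> {1..M}" "t \<in> {tm (m0 - 1)<..tm m0}" using step_cover by blast
  have "indicator {tm (m - 1)<..tm m} t * u (tm m) x = (if m = m0 then u (tm m0) x else 0)"
    if "m \<in> {1..M}" for m
  proof -
    have "t \<in> {tm (m - 1)<..tm m} \<longleftrightarrow> m = m0" using step_disjoint[OF that m0(1) _ m0(2)] m0(2) by blast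
    then show ?thesis by (simp add: indicator_def)
  qed
  then have "(\<Sum>m\<in>{1..M}. indicator {tm (m - 1)<..tm m} t * u (tm m) x)
      = (\<Sum>m\<in>{1..M}. if m = m0 then u (tm m0) x else 0)"
    by (rule sum.cong[OF refl])
  also have "\<dots> = u t x" using m0(1) pwc_step[OF assms m0] by simp
  finally show ?thesis ..
next
  case False
  have "t \<notin> {tm (m - 1)<..tm m}" if "m \<in> {1..M}" for m
  proof -
    have "tm 0 \<le> tm (m - 1)" "tm m \<le> tm M" using that by (auto intro!: tm_mono)
    then show ?thesis using False tm_0 by auto
  qed
  then have "(\<Sum>m\<in>{1..M}. indicator {tm (m - 1)<..tm m} t * u (tm m) x) = 0"
    by (intro sum.neutral) (simp add: indicator_def)
  then show ?thesis using pwc_outside[OF assms False] by simp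
qed

end

section \<open>The space-time form \<open>B\<close>\<close>

lemma sum_atLeast1_telescope:
  fixes f :: "nat \<Rightarrow> 'a::ab_group_add"
  shows "(\<Sum>m=1..n. f m - f (m - 1)) = f n - f 0"
  by (induction n) simp_all

lemma Bform_eq_sum:
  assumes "1 \<le> M" "v (tm 0) = 0"
  shows "Bform tm M \<Omega> v w = (\<Sum>m=1..M. (tm m - tm (m - 1)) * dirichlet_form \<Omega> (v (tm m)) (w (tm m))
                                        + L2ip \<Omega> (v (tm m) - v (tm (m - 1))) (w (tm m)))"
proof -
  have "(\<Sum>m=1..M. L2ip \<Omega> (v (tm m) - v (tm (m - 1))) (w (tm m)))
      = L2ip \<Omega> (v (tm 1)) (w (tm 1)) + (\<Sum>m=2..M. L2ip \<Omega> (v (tm m) - v (tm (m - 1))) (w (tm m)))"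
    using assms by (simp add: sum.atLeast_Suc_atMost numeral_2_eq_2)
  then show ?thesis
    by (simp add: Bform_def dirichlet_form_def sum.distrib fun_diff_def)
qed

context fe_discretisation
begin

lemma pwc_Vh_node: "u \<in> pwc tm M (Vh Tr) \<Longrightarrow> u t \<in> Vh Tr"
  using pwc_mem subspace_0[OF subspace_Vh] by blast

lemma pwc_at_0:
  assumes "u \<in> pwc tm M V"
  shows "u (tm 0) = 0"
proof -
  have "u 0 = 0" by (rule pwc_outside[OF assms]) simp
  then show ?thesis by (simp only: tm_0)
qed

lemma Bform_pwc_eq_sum:
  "v \<in> pwc tm M V \<Longrightarrow>
   Bform tm M \<Omega> v w = (\<Sum>m=1..M. (tm m - tm (m - 1)) * dirichlet_form \<Omega> (v (tm m)) (w (tm m))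
                                   + L2ip \<Omega> (v (tm m) - v (tm (m - 1))) (w (tm m)))"
  by (rule Bform_eq_sum[OF M_pos pwc_at_0])

lemma bilinear_on_Bform: "bilinear_on (pwc tm M (Vh Tr)) (Bform tm M \<Omega>)"
  unfolding bilinear_on_def
proof (intro ballI conjI)
  let ?X = "pwc tm M (Vh Tr)"
  have X: "subspace ?X" by (rule subspace_pwc[OF subspace_Vh])
  have eval: "(\<lambda>v. v s) ` ?X \<subseteq> Vh Tr" for s using pwc_Vh_node by blast
  have diff: "(\<lambda>v. v s - v s') ` ?X \<subseteq> Vh Tr" for s s'
    using pwc_Vh_node subspace_diff[OF subspace_Vh] by blast
  have lin_eval: "linear (\<lambda>v :: real \<Rightarrow> 'a \<Rightarrow> real. v s)" for s by (rule linear_fun_apply)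
  have lin_diff: "linear (\<lambda>v :: real \<Rightarrow> 'a \<Rightarrow> real. v s - v s')" for s s'
    by (intro linear_compose_sub linear_fun_apply)
  fix w assume w: "w \<in> ?X"
  have w_diff: "w s - w s' \<in> Vh Tr" for s s'
    using subspace_diff[OF subspace_Vh pwc_Vh_node[OF w] pwc_Vh_node[OF w]] .
  show "linear_on ?X (\<lambda>v. Bform tm M \<Omega> v w)"
  proof (rule linear_on_cong[OF X Bform_pwc_eq_sum])
    show "linear_on ?X (\<lambda>v. \<Sum>m=1..M. (tm m - tm (m - 1)) * dirichlet_form \<Omega> (v (tm m)) (w (tm m))
                                   + L2ip \<Omega> (v (tm m) - v (tm (m - 1))) (w (tm m)))"
      using pwc_Vh_node[OF w]
      by (intro linear_on_sum linear_on_add linear_on_cmult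
          linear_on_compose[OF bilinear_on_left[OF bilinear_on_dirichlet_form] lin_eval eval]
          linear_on_compose[OF bilinear_on_left[OF bilinear_on_L2ip] lin_diff diff]) auto
  qed
  show "linear_on ?X (Bform tm M \<Omega> w)"
  proof (rule linear_on_cong[OF X])
    show "\<And>v. v \<in> ?X \<Longrightarrow>
      Bform tm M \<Omega> w v = (\<Sum>m=1..M. (tm m - tm (m - 1)) * dirichlet_form \<Omega> (w (tm m)) (v (tm m))
                                   + L2ip \<Omega> (w (tm m) - w (tm (m - 1))) (v (tm m)))"
      using Bform_pwc_eq_sum[OF w] by blast
    show "linear_on ?X (\<lambda>v. \<Sum>m=1..M. (tm m - tm (m - 1)) * dirichlet_form \<Omega> (w (tm m)) (v (tm m))
                                   + L2ip \<Omega> (w (tm m) - w (tm (m - 1))) (v (tm m)))"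
      using w_diff pwc_Vh_node[OF w]
      by (intro linear_on_sum linear_on_add linear_on_cmult
          linear_on_compose[OF bilinear_on_right[OF bilinear_on_dirichlet_form] lin_eval eval]
          linear_on_compose[OF bilinear_on_right[OF bilinear_on_L2ip] lin_eval eval]) auto
  qed
qed

lemma two_Bform_self:
  assumes v: "v \<in> pwc tm M (Vh Tr)"
  shows "2 * Bform tm M \<Omega> v v
    = (\<Sum>m=1..M. 2 * (tm m - tm (m - 1)) * dirichlet_form \<Omega> (v (tm m)) (v (tm m))
                 + L2ip \<Omega> (v (tm m) - v (tm (m - 1))) (v (tm m) - v (tm (m - 1))))
      + L2ip \<Omega> (v (tm M)) (v (tm M))"
proof -
  define E where "E m = L2ip \<Omega> (v (tm m)) (v (tm m))" for m
  have step: "2 * L2ip \<Omega> (v (tm m) - v (tm (m - 1))) (v (tm m))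
      = L2ip \<Omega> (v (tm m) - v (tm (m - 1))) (v (tm m) - v (tm (m - 1))) + (E m - E (m - 1))" for m
    using bilinear_on_diff_self[OF bilinear_on_L2ip subspace_Vh L2ip_commute
        pwc_Vh_node[OF v] pwc_Vh_node[OF v]]
    by (simp add: E_def)
  have "E 0 = 0" using pwc_at_0[OF v] by (simp add: E_def L2ip_def)
  then have telescope: "(\<Sum>m=1..M. E m - E (m - 1)) = E M"
    using sum_atLeast1_telescope[of E M] by simp
  have "2 * Bform tm M \<Omega> v v
      = (\<Sum>m=1..M. 2 * (tm m - tm (m - 1)) * dirichlet_form \<Omega> (v (tm m)) (v (tm m))
                 + 2 * L2ip \<Omega> (v (tm m) - v (tm (m - 1))) (v (tm m)))"
    by (simp add: Bform_pwc_eq_sum[OF v] sum_distrib_left algebra_simps)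
  also have "\<dots> = (\<Sum>m=1..M. (2 * (tm m - tm (m - 1)) * dirichlet_form \<Omega> (v (tm m)) (v (tm m))
                 + L2ip \<Omega> (v (tm m) - v (tm (m - 1))) (v (tm m) - v (tm (m - 1))))
                 + (E m - E (m - 1)))"
    by (simp only: step add.assoc)
  also have "\<dots> = (\<Sum>m=1..M. 2 * (tm m - tm (m - 1)) * dirichlet_form \<Omega> (v (tm m)) (v (tm m))
                 + L2ip \<Omega> (v (tm m) - v (tm (m - 1))) (v (tm m) - v (tm (m - 1)))) + E M"
    by (simp only: sum.distrib telescope)
  finally show ?thesis by (simp only: E_def)
qed

lemma Bform_self_eq_0:
  assumes v: "v \<in> pwc tm M (Vh Tr)" and "Bform tm M \<Omega> v v = 0"
  shows "v = 0"
proof -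
  define d where "d m = v (tm m) - v (tm (m - 1))" for m
  have d_Vh: "d m \<in> Vh Tr" for m
    unfolding d_def using subspace_diff[OF subspace_Vh pwc_Vh_node[OF v] pwc_Vh_node[OF v]] .
  define e where "e m = 2 * (tm m - tm (m - 1)) * dirichlet_form \<Omega> (v (tm m)) (v (tm m))
                               + L2ip \<Omega> (d m) (d m)" for m
  have e_nonneg: "0 \<le> e m" if "m \<in> {1..M}" for m
    using tm_strict_mono[of "m - 1" m] that dirichlet_form_self_nonneg[of \<Omega> "v (tm m)"]
      L2ip_self_nonneg[of \<Omega> "d m"]
    by (auto simp: e_def)
  have "(\<Sum>m=1..M. e m) + L2ip \<Omega> (v (tm M)) (v (tm M)) = 0"
    using two_Bform_self[OF v] assms(2) by (simp add: e_def d_def)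
  then have "(\<Sum>m=1..M. e m) = 0"
    using sum_nonneg[of "{1..M}" e, OF e_nonneg] L2ip_self_nonneg[of \<Omega> "v (tm M)"] by linarith
  then have e_0: "e m = 0" if "m \<in> {1..M}" for m
    using sum_nonneg_eq_0_iff[of "{1..M}" e] e_nonneg that by simp
  have "L2ip \<Omega> (d m) (d m) = 0" if m: "m \<in> {1..M}" for m
  proof -
    have "0 \<le> 2 * (tm m - tm (m - 1)) * dirichlet_form \<Omega> (v (tm m)) (v (tm m))"
      using tm_strict_mono[of "m - 1" m] m dirichlet_form_self_nonneg[of \<Omega> "v (tm m)"] by simp
    then show ?thesis using e_0[OF m] L2ip_self_nonneg[of \<Omega> "d m"] unfolding e_def by linarith
  qed
  then have d_0: "d m = 0" if "m \<in> {1..M}" for m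
    using L2ip_self_eq_0[OF d_Vh] that by blast
  have "m \<le> M \<Longrightarrow> v (tm m) = 0" for m
  proof (induction m)
    case 0
    show ?case by (rule pwc_at_0[OF v])
  next
    case (Suc m)
    then show ?case using d_0[of "Suc m"] by (simp add: d_def)
  qed
  then show ?thesis
    using pwc_eqI[OF v zero_in_pwc[OF subspace_0[OF subspace_Vh]]] by simp
qed

end

section \<open>The discrete harmonic extension\<close>

lemma bdry_restr_0: "bdry_restr \<Omega> 0 = 0"
  by (simp add: bdry_restr_def fun_eq_iff)

lemma bdry_restr_diff: "bdry_restr \<Omega> (u - v) = bdry_restr \<Omega> u - bdry_restr \<Omega> v"
  by (simp add: bdry_restr_def fun_eq_iff)

lemma bdry_restr_add: "bdry_restr \<Omega> (u + v) = bdry_restr \<Omega> u + bdry_restr \<Omega> v"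
  by (simp add: bdry_restr_def fun_eq_iff)

lemma zero_in_VhG: "0 \<in> VhG Tr \<Omega>"
  unfolding VhG_def using bdry_restr_0 subspace_0[OF subspace_Vh] by (metis image_eqI)

lemma VhG_vanishes: "v \<in> VhG Tr \<Omega> \<Longrightarrow> x \<notin> frontier \<Omega> \<Longrightarrow> v x = 0"
  by (auto simp: VhG_def bdry_restr_def)

lemma pwc_bdry_restr: "\<Phi> \<in> pwc tm M (Vh Tr) \<Longrightarrow> (\<lambda>t. bdry_restr \<Omega> (\<Phi> t)) \<in> pwc tm M (VhG Tr \<Omega>)"
  unfolding VhG_def by (rule pwc_compose[where f = "bdry_restr \<Omega>", OF _ bdry_restr_0])

lemma Vh0_iff: "v \<in> Vh0 Tr \<Omega> \<longleftrightarrow> v \<in> Vh Tr \<and> bdry_restr \<Omega> v = 0"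
  by (auto simp: Vh0_def bdry_restr_def fun_eq_iff)

context fe_discretisation
begin

lemma pwc_Vh0_iff:
  "u \<in> pwc tm M (Vh0 Tr \<Omega>) \<longleftrightarrow> u \<in> pwc tm M (Vh Tr) \<and> (\<forall>t. bdry_restr \<Omega> (u t) = 0)"
proof
  assume u: "u \<in> pwc tm M (Vh0 Tr \<Omega>)"
  then show "u \<in> pwc tm M (Vh Tr) \<and> (\<forall>t. bdry_restr \<Omega> (u t) = 0)"
    using pwc_mono[OF Vh0_subset_Vh] pwc_mem[OF u subspace_0[OF subspace_Vh0]] Vh0_iff by blast
next
  assume u: "u \<in> pwc tm M (Vh Tr) \<and> (\<forall>t. bdry_restr \<Omega> (u t) = 0)"
  show "u \<in> pwc tm M (Vh0 Tr \<Omega>)"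
  proof (rule pwcI)
    show "u (tm m) \<in> Vh0 Tr \<Omega>" if "m \<in> {1..M}" for m
      using u pwc_node[OF _ that] Vh0_iff by blast
  qed (use u pwc_step pwc_outside in blast)+
qed

lemma pwc_Vh0_unisolvent:
  "\<exists>F. finite F \<and> (\<forall>f\<in>F. linear f) \<and> (\<forall>u\<in>pwc tm M (Vh0 Tr \<Omega>). (\<forall>f\<in>F. f u = (0::real)) \<longrightarrow> u = 0)"
proof -
  obtain X where X: "finite X" "\<And>v. v \<in> Vh Tr \<Longrightarrow> \<forall>x\<in>X. v x = 0 \<Longrightarrow> v = 0"
    using Vh_unisolvent[OF triangulation] by blast
  define F :: "((real \<Rightarrow> 'a \<Rightarrow> real) \<Rightarrow> real) set" where "F = (\<lambda>(m, x) u. u (tm m) x) ` ({1..M} \<times> X)"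
  have "finite F" using X(1) by (simp add: F_def)
  moreover have "\<forall>f\<in>F. linear f"
    by (auto simp: F_def
        intro: linear_compose[OF linear_fun_apply linear_fun_apply, simplified comp_def])
  moreover have "u = 0" if u: "u \<in> pwc tm M (Vh0 Tr \<Omega>)" and vanish: "\<forall>f\<in>F. f u = 0" for u
  proof (rule pwc_eqI[OF u zero_in_pwc[OF subspace_0[OF subspace_Vh0]]])
    fix m assume m: "m \<in> {1..M}"
    have "u (tm m) \<in> Vh Tr" using pwc_node[OF u m] Vh0_subset_Vh by blast
    moreover have "\<forall>x\<in>X. u (tm m) x = 0" using vanish m by (auto simp: F_def)
    ultimately show "u (tm m) = 0 (tm m)" using X(2) by simp
  qed
  ultimately show ?thesis by blast
qed

lemma harmonic_extension_unique:
  assumes p1: "p1 \<in> pwc tm M (Vh Tr)" "\<forall>\<psi>\<in>pwc tm M (Vh0 Tr \<Omega>). Bform tm M \<Omega> p1 \<psi> = 0"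
    and p2: "p2 \<in> pwc tm M (Vh Tr)" "\<forall>\<psi>\<in>pwc tm M (Vh0 Tr \<Omega>). Bform tm M \<Omega> p2 \<psi> = 0"
    and same_trace: "\<And>t. bdry_restr \<Omega> (p1 t) = bdry_restr \<Omega> (p2 t)"
  shows "p1 = p2"
proof -
  let ?X = "pwc tm M (Vh Tr)"
  have "p1 - p2 \<in> ?X" by (rule subspace_diff[OF subspace_pwc[OF subspace_Vh] p1(1) p2(1)])
  moreover have "bdry_restr \<Omega> ((p1 - p2) t) = 0" for t
    using same_trace[of t] by (simp add: bdry_restr_diff)
  ultimately have d: "p1 - p2 \<in> pwc tm M (Vh0 Tr \<Omega>)" using pwc_Vh0_iff by blast
  have "Bform tm M \<Omega> (p1 - p2) (p1 - p2) = Bform tm M \<Omega> p1 (p1 - p2) - Bform tm M \<Omega> p2 (p1 - p2)"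
    using linear_on_diff[OF bilinear_on_left[OF bilinear_on_Bform \<open>p1 - p2 \<in> ?X\<close>]
        subspace_pwc[OF subspace_Vh] p1(1) p2(1)] .
  also have "\<dots> = 0" using p1(2) p2(2) d by simp
  finally have "p1 - p2 = 0" using Bform_self_eq_0 \<open>p1 - p2 \<in> ?X\<close> by blast
  then show ?thesis by simp
qed

lemma harmonic_extension_exists:
  assumes \<phi>: "\<phi> \<in> pwc tm M (VhG Tr \<Omega>)"
  shows "\<exists>p. p \<in> pwc tm M (Vh Tr) \<and> (\<forall>\<psi>\<in>pwc tm M (Vh0 Tr \<Omega>). Bform tm M \<Omega> p \<psi> = 0)
              \<and> (\<forall>t. bdry_restr \<Omega> (p t) = \<phi> t)"
proof -
  let ?X = "pwc tm M (Vh Tr)" and ?Y = "pwc tm M (Vh0 Tr \<Omega>)"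
  have X: "subspace ?X" by (intro subspace_pwc subspace_Vh)
  have Y: "subspace ?Y" by (intro subspace_pwc subspace_Vh0)
  have "?Y \<subseteq> ?X" by (rule pwc_mono[OF Vh0_subset_Vh])
  have "\<exists>E\<in>?X. \<forall>t. bdry_restr \<Omega> (E t) = \<phi> t"
    by (rule pwc_lift[OF subspace_0[OF subspace_Vh] bdry_restr_0 \<phi>[unfolded VhG_def]])
  then obtain E where E: "E \<in> ?X" "\<forall>t. bdry_restr \<Omega> (E t) = \<phi> t" ..
  obtain F where "finite F \<and> (\<forall>f\<in>F. linear f) \<and> (\<forall>u\<in>?Y. (\<forall>f\<in>F. f u = (0::real)) \<longrightarrow> u = 0)"
    using pwc_Vh0_unisolvent ..
  then have F: "finite F" "\<forall>f\<in>F. linear f" "\<forall>u\<in>?Y. (\<forall>f\<in>F. f u = 0) \<longrightarrow> u = 0"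
    by auto
  have "\<exists>q\<in>?Y. \<forall>\<psi>\<in>?Y. Bform tm M \<Omega> q \<psi> = - 1 * Bform tm M \<Omega> E \<psi>"
  proof (rule bilinear_on_representation[OF F(1) Y])
    show "bilinear_on ?Y (Bform tm M \<Omega>)"
      by (rule bilinear_on_subset[OF bilinear_on_Bform \<open>?Y \<subseteq> ?X\<close>])
    show "linear_on ?Y (\<lambda>\<psi>. - 1 * Bform tm M \<Omega> E \<psi>)"
      by (rule linear_on_cmult[OF linear_on_subset[OF bilinear_on_right[OF bilinear_on_Bform E(1)]
            \<open>?Y \<subseteq> ?X\<close>]])
    show "\<And>f. f \<in> F \<Longrightarrow> linear_on ?Y f" using F(2) by (simp add: linear_imp_linear_on)
    show "\<And>v. v \<in> ?Y \<Longrightarrow> (\<And>f. f \<in> F \<Longrightarrow> f v = 0) \<Longrightarrow> v = 0" using F(3) by blast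
    show "\<And>u. u \<in> ?Y \<Longrightarrow> Bform tm M \<Omega> u u = 0 \<Longrightarrow> u = 0"
      using Bform_self_eq_0 \<open>?Y \<subseteq> ?X\<close> by blast
  qed
  then obtain q where q: "q \<in> ?Y" "\<And>\<psi>. \<psi> \<in> ?Y \<Longrightarrow> Bform tm M \<Omega> q \<psi> = - Bform tm M \<Omega> E \<psi>"
    by auto
  have "q \<in> ?X" using q(1) \<open>?Y \<subseteq> ?X\<close> by blast
  have "E + q \<in> ?X" by (rule subspace_add[OF X E(1) \<open>q \<in> ?X\<close>])
  moreover have "Bform tm M \<Omega> (E + q) \<psi> = 0" if "\<psi> \<in> ?Y" for \<psi>
    using linear_onD[OF bilinear_on_left[OF bilinear_on_Bform] E(1) \<open>q \<in> ?X\<close>, of \<psi> 1] that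
      \<open>?Y \<subseteq> ?X\<close> q(2) by auto
  moreover have "bdry_restr \<Omega> ((E + q) t) = \<phi> t" for t
    using q(1) E(2) pwc_Vh0_iff by (simp add: bdry_restr_add)
  ultimately show ?thesis by blast
qed

lemma pkh_spec:
  assumes "\<phi> \<in> pwc tm M (VhG Tr \<Omega>)"
  shows "pkh Tr tm M \<Omega> \<phi> \<in> pwc tm M (Vh Tr)"
    and "\<forall>\<psi>\<in>pwc tm M (Vh0 Tr \<Omega>). Bform tm M \<Omega> (pkh Tr tm M \<Omega> \<phi>) \<psi> = 0"
    and "\<forall>t. bdry_restr \<Omega> (pkh Tr tm M \<Omega> \<phi> t) = \<phi> t"
proof -
  have "\<exists>!p. p \<in> pwc tm M (Vh Tr) \<and> (\<forall>\<psi>\<in>pwc tm M (Vh0 Tr \<Omega>). Bform tm M \<Omega> p \<psi> = 0)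
              \<and> (\<forall>t. bdry_restr \<Omega> (p t) = \<phi> t)"
    using harmonic_extension_exists[OF assms] harmonic_extension_unique by (metis (no_types))
  from theI'[OF this] show "pkh Tr tm M \<Omega> \<phi> \<in> pwc tm M (Vh Tr)"
    and "\<forall>\<psi>\<in>pwc tm M (Vh0 Tr \<Omega>). Bform tm M \<Omega> (pkh Tr tm M \<Omega> \<phi>) \<psi> = 0"
    and "\<forall>t. bdry_restr \<Omega> (pkh Tr tm M \<Omega> \<phi> t) = \<phi> t"
    unfolding pkh_def by blast+
qed

end

section \<open>Space-time integrals and the main result\<close>

lemma abs_le_1_plus_square: "\<bar>a::real\<bar> \<le> 1 + a\<^sup>2"
proof -
  have "0 \<le> (\<bar>a\<bar> - 1)\<^sup>2" by simp
  then show ?thesis by (simp add: power2_eq_square algebra_simps abs_mult_self_eq)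
qed

lemma absolutely_integrable_L2_mult_bounded:
  fixes g f :: "'a::euclidean_space \<Rightarrow> real"
  assumes S: "S \<in> lmeasurable"
    and g: "set_borel_measurable lebesgue S g" "(\<lambda>x. (g x)\<^sup>2) absolutely_integrable_on S"
    and f: "f \<in> borel_measurable lebesgue" "\<And>x. \<bar>f x\<bar> \<le> B"
  shows "(\<lambda>x. g x * f x) absolutely_integrable_on S"
proof -
  have dom: "(\<lambda>x. 1 + (g x)\<^sup>2) absolutely_integrable_on S"
    by (rule set_integral_add(1)[OF absolutely_integrable_on_const[OF S] g(2)])
  have "\<bar>a\<bar> \<le> \<bar>1 + a\<^sup>2\<bar>" for a :: real
    using abs_le_1_plus_square[of a] abs_ge_self[of "1 + a\<^sup>2"] by linarith
  then have "g absolutely_integrable_on S"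
    by (intro set_integrable_bound[OF dom g(1)] AE_I2) simp
  moreover have "f \<in> borel_measurable (lebesgue_on S)" by (rule measurable_restrict_space1[OF f(1)])
  moreover have "bounded (f ` S)" using f(2) by (auto simp: bounded_iff)
  moreover have "S \<in> sets lebesgue" using S by (simp add: fmeasurable_def)
  ultimately have "(\<lambda>x. f x * g x) absolutely_integrable_on S"
    using absolutely_integrable_bounded_measurable_product[OF bilinear_times] by blast
  then show ?thesis by (simp add: mult.commute)
qed

lemma bdry_ipT_bdry_restr:
  assumes "\<And>t x. x \<notin> frontier \<Omega> \<Longrightarrow> w t x = 0"
  shows "bdry_ipT T \<Omega> w (\<lambda>t. bdry_restr \<Omega> (\<Phi> t)) = bdry_ipT T \<Omega> w \<Phi>"
proof -
  have "(\<lambda>x. w t x * bdry_restr \<Omega> (\<Phi> t) x) = (\<lambda>x. w t x * \<Phi> t x)" for t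
    using assms by (auto simp: bdry_restr_def fun_eq_iff)
  then show ?thesis by (simp add: bdry_ipT_def)
qed

context fe_discretisation
begin

lemma pwc_Vh_bounded:
  assumes u: "u \<in> pwc tm M (Vh Tr)"
  shows "\<exists>B. \<forall>t x. \<bar>u t x\<bar> \<le> B"
proof -
  have "\<forall>m. \<exists>B. \<forall>x. \<bar>u (tm m) x\<bar> \<le> B" using Vh_bounded pwc_Vh_node[OF u] by blast
  then obtain B where B: "\<And>m x. \<bar>u (tm m) x\<bar> \<le> B m" by metis
  have "\<bar>u t x\<bar> \<le> (\<Sum>m\<in>{1..M}. \<bar>B m\<bar>)" for t x
  proof (cases "t \<in> {0<..tm M}")
    case True
    then obtain m where m: "m \<in> {1..M}" "t \<in> {tm (m - 1)<..tm m}" using step_cover by blast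
    have "\<bar>u t x\<bar> \<le> \<bar>B m\<bar>" using B[of m x] pwc_step[OF u m] by simp
    also have "\<dots> \<le> (\<Sum>m\<in>{1..M}. \<bar>B m\<bar>)" using m(1) by (intro member_le_sum) auto
    finally show ?thesis .
  next
    case False
    then show ?thesis using pwc_outside[OF u False] by (simp add: sum_nonneg)
  qed
  then show ?thesis by blast
qed

lemma pwc_Vh_measurable:
  assumes u: "u \<in> pwc tm M (Vh Tr)"
  shows "(\<lambda>p. u (fst p) (snd p)) \<in> borel_measurable (lebesgue :: (real \<times> 'a) measure)"
proof -
  have "(\<lambda>p. \<Sum>m\<in>{1..M}. indicator {tm (m - 1)<..tm m} (fst p) * u (tm m) (snd p))
      \<in> borel_measurable (borel :: (real \<times> 'a) measure)"
  proof (intro borel_measurable_sum borel_measurable_times)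
    have "(fst :: real \<times> 'a \<Rightarrow> real) \<in> borel_measurable borel"
      by (intro borel_measurable_continuous_onI continuous_intros)
    then show "(\<lambda>p::real \<times> 'a. indicator {tm (m - 1)<..tm m} (fst p)) \<in> borel_measurable borel" for m
      by (rule measurable_compose[OF _ borel_measurable_indicator]) simp
    have "(snd :: real \<times> 'a \<Rightarrow> 'a) \<in> borel \<rightarrow>\<^sub>M borel"
      by (intro borel_measurable_continuous_onI continuous_intros)
    then show "(\<lambda>p::real \<times> 'a. u (tm m) (snd p)) \<in> borel_measurable borel" for m
      by (rule measurable_compose[OF _ Vh_borel_measurable[OF pwc_Vh_node[OF u]]])
  qed
  moreover have "(\<lambda>p. u (fst p) (snd p))
      = (\<lambda>p. \<Sum>m\<in>{1..M}. indicator {tm (m - 1)<..tm m} (fst p) * u (tm m) (snd p))"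
    by (rule ext) (rule pwc_indicator_sum[OF u])
  ultimately have "(\<lambda>p. u (fst p) (snd p)) \<in> borel_measurable (borel :: (real \<times> 'a) measure)"
    by simp
  then show ?thesis by (intro measurable_completion) simp
qed

lemma L2ipT_diff:
  assumes g_meas: "set_borel_measurable lebesgue ({0<..<T} \<times> \<Omega>) (\<lambda>p. g (fst p) (snd p))"
    and g_L2: "set_integrable lebesgue ({0<..<T} \<times> \<Omega>) (\<lambda>p. (g (fst p) (snd p))\<^sup>2)"
    and u: "u \<in> pwc tm M (Vh Tr)" and v: "v \<in> pwc tm M (Vh Tr)"
  shows "L2ipT T \<Omega> g (u - v) = L2ipT T \<Omega> g u - L2ipT T \<Omega> g v"
proof -
  have S: "{0<..<T} \<times> \<Omega> \<in> lmeasurable"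
    using bounded_domain open_domain by (intro lmeasurable_open bounded_Times open_Times) auto
  have int: "set_integrable lebesgue ({0<..<T} \<times> \<Omega>) (\<lambda>p. g (fst p) (snd p) * w (fst p) (snd p))"
    if "w \<in> pwc tm M (Vh Tr)" for w
    using pwc_Vh_bounded[OF that] pwc_Vh_measurable[OF that]
    by (metis absolutely_integrable_L2_mult_bounded[OF S g_meas g_L2])
  show ?thesis
    unfolding L2ipT_def using set_integral_diff(2)[OF int[OF u] int[OF v]]
    by (simp add: right_diff_distrib)
qed

lemma Bform_minus_L2ipT_eq_pkh:
  assumes g_meas: "set_borel_measurable lebesgue ({0<..<T} \<times> \<Omega>) (\<lambda>p. g (fst p) (snd p))"
    and g_L2: "set_integrable lebesgue ({0<..<T} \<times> \<Omega>) (\<lambda>p. (g (fst p) (snd p))\<^sup>2)"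
    and z_X0: "z \<in> pwc tm M (Vh0 Tr \<Omega>)"
    and z_eq: "\<forall>\<phi>\<in>pwc tm M (Vh0 Tr \<Omega>). Bform tm M \<Omega> \<phi> z = L2ipT T \<Omega> g \<phi>"
    and \<Phi>: "\<Phi> \<in> pwc tm M (Vh Tr)"
  shows "Bform tm M \<Omega> \<Phi> z - L2ipT T \<Omega> g \<Phi>
       = - L2ipT T \<Omega> g (pkh Tr tm M \<Omega> (\<lambda>t. bdry_restr \<Omega> (\<Phi> t)))"
proof -
  let ?X = "pwc tm M (Vh Tr)"
  define p where "p = pkh Tr tm M \<Omega> (\<lambda>t. bdry_restr \<Omega> (\<Phi> t))"
  note p = pkh_spec[OF pwc_bdry_restr[OF \<Phi>], folded p_def]
  have "z \<in> ?X" using z_X0 pwc_mono[OF Vh0_subset_Vh] by blast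
  have "\<Phi> - p \<in> ?X" by (rule subspace_diff[OF subspace_pwc[OF subspace_Vh] \<Phi> p(1)])
  moreover have "bdry_restr \<Omega> ((\<Phi> - p) t) = 0" for t
    using p(3) by (simp add: bdry_restr_diff)
  ultimately have "\<Phi> - p \<in> pwc tm M (Vh0 Tr \<Omega>)" using pwc_Vh0_iff by blast
  then have "L2ipT T \<Omega> g \<Phi> - L2ipT T \<Omega> g p = Bform tm M \<Omega> (\<Phi> - p) z"
    using z_eq L2ipT_diff[OF g_meas g_L2 \<Phi> p(1)] by simp
  also have "\<dots> = Bform tm M \<Omega> \<Phi> z - Bform tm M \<Omega> p z"
    by (rule linear_on_diff[OF bilinear_on_left[OF bilinear_on_Bform \<open>z \<in> ?X\<close>]
          subspace_pwc[OF subspace_Vh] \<Phi> p(1)])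
  also have "Bform tm M \<Omega> p z = 0" using p(2) z_X0 by blast
  finally show ?thesis by (simp add: p_def)
qed

end

theorem proposition4p1:
  fixes \<Omega> :: "'a::euclidean_space set"
    and Tr :: "'a set set"
    and tm :: "nat \<Rightarrow> real" and M :: nat and T :: real
    and g z w :: "real \<Rightarrow> 'a \<Rightarrow> real"
  assumes dim: "DIM('a) = 2 \<or> DIM('a) = 3"
    and dom: "open \<Omega>" "\<Omega> \<noteq> {}" "bounded \<Omega>" "convex \<Omega>" "polytope (closure \<Omega>)"
    and tri: "triangulation Tr \<Omega>"
    and mesh: "time_mesh tm M T"
    and g_meas: "set_borel_measurable lebesgue ({0<..<T} \<times> \<Omega>) (\<lambda>p. g (fst p) (snd p))"
    and g_L2: "set_integrable lebesgue ({0<..<T} \<times> \<Omega>) (\<lambda>p. (g (fst p) (snd p))\<^sup>2)"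
    and z_X0: "z \<in> pwc tm M (Vh0 Tr \<Omega>)"
    and z_eq: "\<forall>\<phi>\<in>pwc tm M (Vh0 Tr \<Omega>). Bform tm M \<Omega> \<phi> z = L2ipT T \<Omega> g \<phi>"
    and w_XG: "w \<in> pwc tm M (VhG Tr \<Omega>)"
  shows "(\<forall>\<phi>\<in>pwc tm M (VhG Tr \<Omega>).
            bdry_ipT T \<Omega> w \<phi> = - L2ipT T \<Omega> g (pkh Tr tm M \<Omega> \<phi>))
     \<longleftrightarrow> (\<forall>\<Phi>\<in>pwc tm M (Vh Tr).
            bdry_ipT T \<Omega> w \<Phi> = Bform tm M \<Omega> \<Phi> z - L2ipT T \<Omega> g \<Phi>)"
proof -
  interpret fe_discretisation Tr \<Omega> tm M T
    by unfold_locales (use tri dom mesh in auto)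
  have trace: "bdry_ipT T \<Omega> w (\<lambda>t. bdry_restr \<Omega> (\<Phi> t)) = bdry_ipT T \<Omega> w \<Phi>" for \<Phi>
    using VhG_vanishes[OF pwc_mem[OF w_XG zero_in_VhG]] by (rule bdry_ipT_bdry_restr)
  note key = Bform_minus_L2ipT_eq_pkh[OF g_meas g_L2 z_X0 z_eq]
  show ?thesis
  proof (intro iffI ballI)
    fix \<Phi>
    assume A: "\<forall>\<phi>\<in>pwc tm M (VhG Tr \<Omega>). bdry_ipT T \<Omega> w \<phi> = - L2ipT T \<Omega> g (pkh Tr tm M \<Omega> \<phi>)"
      and \<Phi>: "\<Phi> \<in> pwc tm M (Vh Tr)"
    show "bdry_ipT T \<Omega> w \<Phi> = Bform tm M \<Omega> \<Phi> z - L2ipT T \<Omega> g \<Phi>"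
      using A[rule_format, OF pwc_bdry_restr[OF \<Phi>]] trace[of \<Phi>] key[OF \<Phi>] by linarith
  next
    fix \<phi>
    assume B: "\<forall>\<Phi>\<in>pwc tm M (Vh Tr). bdry_ipT T \<Omega> w \<Phi> = Bform tm M \<Omega> \<Phi> z - L2ipT T \<Omega> g \<Phi>"
      and \<phi>: "\<phi> \<in> pwc tm M (VhG Tr \<Omega>)"
    note p = pkh_spec[OF \<phi>]
    have p_trace: "(\<lambda>t. bdry_restr \<Omega> (pkh Tr tm M \<Omega> \<phi> t)) = \<phi>" using p(3) by simp
    show "bdry_ipT T \<Omega> w \<phi> = - L2ipT T \<Omega> g (pkh Tr tm M \<Omega> \<phi>)"
      using B[rule_format, OF p(1)] trace[of "pkh Tr tm M \<Omega> \<phi>", unfolded p_trace]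
        key[OF p(1), unfolded p_trace]
      by linarith
  qed
qed

end
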